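(* Let $T$ be the class theory NACT-PriNSA, i.e. the class-theoretic frame CT (described in the context) together with the schema PriNSA: for every formula $A(x)$, $$\neg A(\{x : A(x)\}) \;\Longrightarrow\; \mathrm{set}(\{x : A(x)\}).$$ Then $T$ is inconsistent.
   Context: The frame CT is a two-sorted-style class theory (in the manner of von Neumann–Bernays–Gödel) in which the objects are classes, $\in$ is membership, and $\mathrm{set}(X)$ is a predicate saying that the class $X$ is a set. CT consists of: (1) the class operator $\{x : A(x)\} := \{X : \mathrm{set}(X) \ \&\ A(X)\}$, i.e. the class of all sets $X$ satisfying $A$; (2) the Church comprehension schema, asserting that for every formula $A$ the class $\{x : A(x)\}$ exists (its members are exactly the sets satisfying $A$); (3) extensionality for classes; (4) an axiom of choice. A formula $A$ is called self-applicable, $\mathrm{SA}(A)$, if $A(\{X : \mathrm{set}(X) \ \&\ A(X)\})$ holds, i.e. the class defined by $A$ itself satisfies $A$; the schema PriNSA ("Principle of Not-allowed SelfApplication") says that every class defined by a non-self-applicable formula is a set. *)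

theory Defs
  imports Main
begin

text \<open>First-order formulas of the class language: membership, the predicate set,
  and equality; variables are de Bruijn indices.\<close>

datatype fm =
    Mem nat nat
  | IsSet nat
  | Eq nat nat
  | Neg fm
  | Conj fm fm
  | Disj fm fm
  | Imp fm fm
  | Ex fm
  | All fm

fun sat :: "('c \<Rightarrow> 'c \<Rightarrow> bool) \<Rightarrow> ('c \<Rightarrow> bool) \<Rightarrow> (nat \<Rightarrow> 'c) \<Rightarrow> fm \<Rightarrow> bool" where
  "sat mem st e (Mem i j) = mem (e i) (e j)"
| "sat mem st e (IsSet i) = st (e i)"
| "sat mem st e (Eq i j) = (e i = e j)"
| "sat mem st e (Neg A) = (\<not> sat mem st e A)"
| "sat mem st e (Conj A B) = (sat mem st e A \<and> sat mem st e B)"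
| "sat mem st e (Disj A B) = (sat mem st e A \<or> sat mem st e B)"
| "sat mem st e (Imp A B) = (sat mem st e A \<longrightarrow> sat mem st e B)"
| "sat mem st e (Ex A) = (\<exists>x. sat mem st (case_nat x e) A)"
| "sat mem st e (All A) = (\<forall>x. sat mem st (case_nat x e) A)"

text \<open>c is the class {x : A(x)} (with parameters e): its members are exactly the
  sets satisfying A; variable 0 of A plays the role of x.\<close>

definition defines_class ::
  "('c \<Rightarrow> 'c \<Rightarrow> bool) \<Rightarrow> ('c \<Rightarrow> bool) \<Rightarrow> fm \<Rightarrow> (nat \<Rightarrow> 'c) \<Rightarrow> 'c \<Rightarrow> bool" where
  "defines_class mem st A e c \<longleftrightarrow>
     (\<forall>y. mem y c \<longleftrightarrow> st y \<and> sat mem st (case_nat y e) A)"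

definition CT_model :: "('c \<Rightarrow> 'c \<Rightarrow> bool) \<Rightarrow> ('c \<Rightarrow> bool) \<Rightarrow> bool" where
  "CT_model mem st \<longleftrightarrow>
     (\<forall>A e. \<exists>c. defines_class mem st A e c) \<and>
     (\<forall>a b. (\<forall>z. mem z a \<longleftrightarrow> mem z b) \<longrightarrow> a = b)"

definition PriNSA :: "('c \<Rightarrow> 'c \<Rightarrow> bool) \<Rightarrow> ('c \<Rightarrow> bool) \<Rightarrow> bool" where
  "PriNSA mem st \<longleftrightarrow>
     (\<forall>A e c. defines_class mem st A e c \<longrightarrow>
        \<not> sat mem st (case_nat c e) A \<longrightarrow> st c)"

end

theory Submission
  imports Defs
begin

text \<open>Take Russell's class R = {x : x \<notin> x \<and> set(x)}. If R were a set, then R \<in> R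
  would hold iff R \<notin> R, so R is a proper class. But then R fails its own defining
  formula, which is therefore not self-applicable, and PriNSA makes R a set.\<close>

definition russell_fm :: fm where
  "russell_fm = Conj (Neg (Mem 0 0)) (IsSet 0)"

lemma russell_class_not_set:
  assumes "defines_class mem st russell_fm e r"
  shows "\<not> st r"
proof -
  have "mem r r \<longleftrightarrow> st r \<and> sat mem st (case_nat r e) russell_fm"
    using assms unfolding defines_class_def by (rule spec)
  then have "mem r r \<longleftrightarrow> st r \<and> \<not> mem r r"
    unfolding russell_fm_def by (simp only: sat.simps nat.case) blast
  then show ?thesis by blast
qed

lemma russell_fm_not_self_applicable:
  assumes "defines_class mem st russell_fm e r"
  shows "\<not> sat mem st (case_nat r e) russell_fm"
  using russell_class_not_set [OF assms] by (simp add: russell_fm_def)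

theorem mainTheorem1:
  fixes mem :: "'c \<Rightarrow> 'c \<Rightarrow> bool" and st :: "'c \<Rightarrow> bool"
  shows "\<not> (CT_model mem st \<and> PriNSA mem st)"
proof
  assume "CT_model mem st \<and> PriNSA mem st"
  then have comprehension: "\<forall>A e. \<exists>c. defines_class mem st A e c"
    and prinsa: "PriNSA mem st"
    by (simp_all add: CT_model_def)
  obtain r where r: "defines_class mem st russell_fm (\<lambda>_. undefined) r"
    using comprehension by blast
  have "st r"
    using prinsa r russell_fm_not_self_applicable [OF r] by (simp add: PriNSA_def)
  with russell_class_not_set [OF r] show False by contradiction
qed

end
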